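(* Consider online Min Sum Set Cover in the bandit setting with $n$ boxes (all box values in $\{0,\infty\}$, one box to be selected). There is an online algorithm $\mathcal{A}$ such that $\mathbb{E}\Big[\frac1T\sum_{t=1}^T\big(\mathcal{A}(t)-\mathrm{OPT}\big)\Big]\le \mathrm{OPT}+O\!\left(\frac{n^2}{\sqrt{T}}\right),$ where $\mathcal{A}(t)$ is the algorithm's cost in round $t$ and $\mathrm{OPT}$ is the per-round cost of the optimal non-adaptive strategy.
   Context: Online Min Sum Set Cover: there are $n$ boxes $\mathcal{B}=\{1,\dots,n\}$. An oblivious adversary fixes in advance, for each round $t=1,\dots,T$, a scenario $c(t)\in\{0,\infty\}^n$ (each scenario has at least one box of value $0$). In each round the algorithm opens boxes one at a time, observing each opened box's value, and stops having selected an opened box; its cost in round $t$ is the number of opened boxes plus the value of the selected box. Bandit setting: the algorithm only learns the values of boxes it opened. A non-adaptive strategy opens the same fixed set $S\subseteq\mathcal{B}$ in every round and selects its cheapest box; in this $0/\infty$ case its per-round cost is $|S|$ if $S$ contains a value-$0$ box in every round (and $\infty$ otherwise), and $\mathrm{OPT}$ is the minimum of this cost over all $S$. *)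

theory Defs
  imports "HOL-Probability.Probability"
begin

text \<open>Boxes are the natural numbers 0..n-1.  A scenario for a round is a value
  vector c :: nat => ennreal (only the entries below n matter); in the 0/infinity
  case every entry is 0 or infinity.\<close>

type_synonym obs = "(nat \<times> ennreal) list"   \<comment> \<open>boxes opened in a round, with observed values\<close>

datatype action = Open nat | Select nat

text \<open>A within-round (adaptive) policy: from the observations made so far in the
  round, decide to open a further box or to stop and select a box.\<close>
type_synonym policy = "obs \<Rightarrow> action"

text \<open>A deterministic online algorithm: the policy used in a round depends only on
  the bandit feedback of the earlier rounds (the observation lists of those rounds).\<close>
type_synonym det_alg = "obs list \<Rightarrow> policy"

text \<open>Invalid behaviour (opening a non-box, selecting an unopened box,
  running out of fuel) is charged infinite cost.\<close>
fun run_round :: "nat \<Rightarrow> policy \<Rightarrow> (nat \<Rightarrow> ennreal) \<Rightarrow> nat \<Rightarrow> obs \<Rightarrow> obs \<times> ennreal" where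
  "run_round n p c 0 os = (os, \<infinity>)"
| "run_round n p c (Suc k) os =
     (case p os of
        Open b \<Rightarrow> (if b < n then run_round n p c k (os @ [(b, c b)]) else (os, \<infinity>))
      | Select b \<Rightarrow> (os, if b \<in> fst ` set os then of_nat (length os) + c b else \<infinity>))"

text \<open>History (feedback of rounds 1..t) of a deterministic algorithm against the
  scenario sequence c (c t is the scenario of round t, t >= 1).\<close>
fun history :: "nat \<Rightarrow> det_alg \<Rightarrow> (nat \<Rightarrow> nat \<Rightarrow> ennreal) \<Rightarrow> nat \<Rightarrow> obs list" where
  "history n D c 0 = []"
| "history n D c (Suc t) =
     (let h = history n D c t in h @ [fst (run_round n (D h) (c (Suc t)) (Suc n) [])])"

definition round_cost :: "nat \<Rightarrow> det_alg \<Rightarrow> (nat \<Rightarrow> nat \<Rightarrow> ennreal) \<Rightarrow> nat \<Rightarrow> ennreal" where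
  "round_cost n D c t = snd (run_round n (D (history n D c (t - 1))) (c t) (Suc n) [])"

text \<open>Per-round cost of the non-adaptive strategy that opens S every round and
  selects its cheapest box (0/infinity case), and OPT.\<close>
definition na_cost :: "nat \<Rightarrow> (nat \<Rightarrow> nat \<Rightarrow> ennreal) \<Rightarrow> nat set \<Rightarrow> ennreal" where
  "na_cost T c S = (if \<forall>t\<in>{1..T}. \<exists>b\<in>S. c t b = 0 then of_nat (card S) else \<infinity>)"

definition OPT :: "nat \<Rightarrow> nat \<Rightarrow> (nat \<Rightarrow> nat \<Rightarrow> ennreal) \<Rightarrow> ennreal" where
  "OPT n T c = (INF S \<in> Pow {..<n}. na_cost T c S)"

definition valid_scenarios :: "nat \<Rightarrow> nat \<Rightarrow> (nat \<Rightarrow> nat \<Rightarrow> ennreal) \<Rightarrow> bool" where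
  "valid_scenarios n T c \<longleftrightarrow>
     (\<forall>t\<in>{1..T}. (\<forall>b<n. c t b = 0 \<or> c t b = \<infinity>) \<and> (\<exists>b<n. c t b = 0))"

end

theory Submission
  imports Defs
begin

(* In every round the algorithm explores with probability p, opening all n boxes, and
   otherwise exploits: with k the least size of a box set hitting the zero set of every
   explored round so far, it opens a uniformly random such k-set S first and the other
   boxes afterwards.  Since k <= OPT, exploiting costs more than OPT only when S misses
   the current zero set, i.e. with probability f, the fraction of size-k candidates
   missing it; but exploring in this round would rule out exactly those candidates.
   With V_j the candidate j-sets, the potential sum_j H(|V_j|) (H the harmonic numbers)
   never increases, is at most (n+1)^2, and drops by at least f when exploring.  Charging
   a = n(1-p)/p per unit of potential, every round costs at most OPT + p n in amortised
   expectation, so the total excess is at most T p n + a (n+1)^2, which is O(n^2 sqrt T)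
   for p = (n+1)/sqrt T. *)

section \<open>Exploring and scanning rounds\<close>

definition explore_policy :: "nat \<Rightarrow> policy" where
  "explore_policy n os = (if length os < n then Open (length os)
     else case find (\<lambda>x. snd x = 0) os of Some x \<Rightarrow> Select (fst x) | None \<Rightarrow> Select 0)"

definition scan_policy :: "nat list \<Rightarrow> policy" where
  "scan_policy L os =
     (case find (\<lambda>x. snd x = 0) os of Some x \<Rightarrow> Select (fst x) | None \<Rightarrow> Open (L ! length os))"

definition observe :: "(nat \<Rightarrow> ennreal) \<Rightarrow> nat list \<Rightarrow> obs" where
  "observe c L = map (\<lambda>b. (b, c b)) L"

lemma find_append_None: "find P xs = None \<Longrightarrow> find P (xs @ ys) = find P ys"
  by (induction xs) auto

lemma run_round_explore_policy:
  assumes "\<exists>b<n. c b = 0" and "i \<le> n" and "n - i < fuel"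
  shows "run_round n (explore_policy n) c fuel (observe c [0..<i]) = (observe c [0..<n], of_nat n)"
  using assms(2,3)
proof (induction fuel arbitrary: i)
  case 0
  then show ?case by simp
next
  case (Suc fuel)
  show ?case
  proof (cases "i < n")
    case True
    have "observe c [0..<i] @ [(i, c i)] = observe c [0..<Suc i]"
      by (simp add: observe_def)
    with Suc.IH[of "Suc i"] Suc.prems True show ?thesis
      by (simp add: explore_policy_def observe_def)
  next
    case False
    then have i: "i = n" using Suc.prems by simp
    obtain b where "b < n" "c b = 0" using assms(1) by auto
    then have "find (\<lambda>x. snd x = 0) (observe c [0..<n]) \<noteq> None"
      by (auto simp: find_None_iff observe_def)
    then obtain x where x: "find (\<lambda>x. snd x = 0) (observe c [0..<n]) = Some x"
      by auto
    then have "x \<in> set (observe c [0..<n])" "snd x = 0"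
      by (auto dest!: find_Some_iff[THEN iffD1] simp: nth_mem)
    then have "fst x \<in> fst ` set (observe c [0..<n])" "c (fst x) = 0"
      by (auto simp: observe_def)
    then show ?thesis using i x by (simp add: explore_policy_def observe_def)
  qed
qed

lemma run_round_explore:
  "\<exists>b<n. c b = 0 \<Longrightarrow> run_round n (explore_policy n) c (Suc n) [] = (observe c [0..<n], of_nat n)"
  using run_round_explore_policy[of n c 0 "Suc n"] by (simp add: observe_def)

lemma run_round_scan_policy:
  assumes L: "set L \<subseteq> {..<n}" and j: "j < length L" "c (L ! j) = 0"
    and before: "\<forall>l<j. c (L ! l) \<noteq> 0"
    and "i \<le> j" and "j - i < fuel - 1"
  shows "run_round n (scan_policy L) c fuel (observe c (take i L)) =
           (observe c (take (Suc j) L), of_nat (Suc j))"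
  using assms(5,6)
proof (induction fuel arbitrary: i)
  case 0
  then show ?case by simp
next
  case (Suc fuel)
  have no_zero: "find (\<lambda>x. snd x = 0) (observe c (take i L)) = None"
    using Suc.prems before j by (auto simp: find_None_iff observe_def in_set_conv_nth)
  have len: "length (observe c (take i L)) = i"
    using Suc.prems j by (simp add: observe_def)
  have box: "L ! i < n"
    using L j Suc.prems by (meson le_less_trans lessThan_iff nth_mem subsetD)
  have snoc: "observe c (take i L) @ [(L ! i, c (L ! i))] = observe c (take (Suc i) L)"
    using Suc.prems j by (simp add: observe_def take_Suc_conv_app_nth)
  show ?case
  proof (cases "i < j")
    case True
    with Suc.IH[of "Suc i"] Suc.prems no_zero len box snoc show ?thesis
      by (simp add: scan_policy_def)
  next
    case False
    then have i: "i = j" using Suc.prems by simp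
    then obtain fuel' where fuel: "fuel = Suc fuel'" using Suc.prems by (cases fuel) auto
    have "find (\<lambda>x. snd x = 0) (observe c (take (Suc j) L)) = Some (L ! j, c (L ! j))"
      using j no_zero[unfolded i] by (simp add: observe_def take_Suc_conv_app_nth find_append_None)
    moreover have "L ! j \<in> fst ` set (observe c (take (Suc j) L))"
      using j by (simp add: observe_def take_Suc_conv_app_nth)
    moreover have "length (observe c (take (Suc j) L)) = Suc j"
      using j by (simp add: observe_def)
    ultimately show ?thesis using i no_zero len box snoc fuel j by (simp add: scan_policy_def)
  qed
qed

lemma scan_policy_cost_le:
  assumes L: "set L \<subseteq> {..<n}" "length L \<le> n" and l: "l < length L" "c (L ! l) = 0"
  shows "snd (run_round n (scan_policy L) c (Suc n) []) \<le> of_nat (Suc l)"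
proof -
  define P where "P = (\<lambda>l. l < length L \<and> c (L ! l) = 0)"
  define j where "j = (LEAST l. P l)"
  have "P l" using l by (simp add: P_def)
  then have Pj: "P j" and "j \<le> l"
    unfolding j_def by (rule LeastI, rule Least_le)
  have "\<forall>l'<j. c (L ! l') \<noteq> 0"
  proof (intro allI impI)
    fix l' assume "l' < j"
    then show "c (L ! l') \<noteq> 0"
      using Pj not_less_Least[of l' P] by (simp add: P_def j_def)
  qed
  then have "run_round n (scan_policy L) c (Suc n) (observe c (take 0 L)) =
               (observe c (take (Suc j) L), of_nat (Suc j))"
    using Pj L by (intro run_round_scan_policy) (auto simp: P_def)
  then show ?thesis
    using \<open>j \<le> l\<close> by (simp add: observe_def del: run_round.simps)
qed

lemma run_round_observations_faithful:
  "\<forall>x\<in>set os. fst x < n \<and> snd x = c (fst x) \<Longrightarrow>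
   \<forall>x\<in>set (fst (run_round n p c fuel os)). fst x < n \<and> snd x = c (fst x)"
proof (induction fuel arbitrary: os)
  case 0
  then show ?case by simp
next
  case (Suc fuel)
  show ?case
  proof (cases "p os")
    case (Open b)
    then show ?thesis using Suc.IH[of "os @ [(b, c b)]"] Suc.prems by auto
  next
    case (Select b)
    then show ?thesis using Suc.prems by simp
  qed
qed

definition scan_order :: "nat \<Rightarrow> nat set \<Rightarrow> nat list" where
  "scan_order n S = sorted_list_of_set S @ filter (\<lambda>b. b \<notin> S) [0..<n]"

lemma set_scan_order: "S \<subseteq> {..<n} \<Longrightarrow> set (scan_order n S) = {..<n}"
  using finite_subset[of S "{..<n}"] by (auto simp: scan_order_def)

lemma length_scan_order:
  assumes "S \<subseteq> {..<n}"
  shows "length (scan_order n S) = n"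
proof -
  have fin: "finite S" using assms finite_subset by blast
  have "length (filter (\<lambda>b. b \<notin> S) [0..<n]) = card ({..<n} - S)"
    by (subst distinct_length_filter) (auto intro: arg_cong[where f=card])
  also have "\<dots> = n - card S" using assms fin by (simp add: card_Diff_subset)
  finally show ?thesis
    using assms fin card_mono[of "{..<n}" S] by (simp add: scan_order_def)
qed

lemma scan_order_index:
  assumes "S \<subseteq> {..<n}" and "b \<in> S"
  shows "\<exists>l<card S. scan_order n S ! l = b"
proof -
  have fin: "finite S" using assms finite_subset by blast
  then obtain l where "l < length (sorted_list_of_set S)" "sorted_list_of_set S ! l = b"
    using assms(2) by (metis in_set_conv_nth set_sorted_list_of_set)
  then show ?thesis using fin by (auto simp: scan_order_def nth_append)
qed

lemma scan_order_cost_le: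
  assumes S: "S \<subseteq> {..<n}" and zero: "\<exists>b<n. c b = 0"
  shows "snd (run_round n (scan_policy (scan_order n S)) c (Suc n) []) \<le>
           of_nat (if \<exists>b\<in>S. c b = 0 then card S else n)"
proof (cases "\<exists>b\<in>S. c b = 0")
  case True
  then obtain b where "b \<in> S" "c b = 0" by blast
  moreover obtain l where "l < card S" "scan_order n S ! l = b"
    using scan_order_index[OF S \<open>b \<in> S\<close>] by blast
  moreover have "card S \<le> n"
    using S by (metis card_lessThan card_mono finite_lessThan)
  ultimately have "snd (run_round n (scan_policy (scan_order n S)) c (Suc n) []) \<le> of_nat (Suc l)"
    using S by (intro scan_policy_cost_le) (simp_all add: set_scan_order length_scan_order)
  also have "\<dots> \<le> of_nat (card S)"
    using \<open>l < card S\<close> by (intro of_nat_mono) simp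
  finally show ?thesis using True by simp
next
  case False
  obtain b where "b < n" "c b = 0" using zero by blast
  then obtain l where "l < n" "scan_order n S ! l = b"
    using set_scan_order[OF S] length_scan_order[OF S] by (metis in_set_conv_nth lessThan_iff)
  then have "snd (run_round n (scan_policy (scan_order n S)) c (Suc n) []) \<le> of_nat (Suc l)"
    using S \<open>c b = 0\<close> by (intro scan_policy_cost_le) (simp_all add: set_scan_order length_scan_order)
  also have "\<dots> \<le> of_nat n"
    using \<open>l < n\<close> by (intro of_nat_mono) simp
  finally show ?thesis using False by simp
qed

section \<open>Candidate sets and their potential\<close>

lemma harm_add_le: "harm (m + d) \<le> (harm m :: real) + real d / real (Suc m)"
proof (induction d)
  case 0
  then show ?case by simp
next
  case (Suc d)
  have "inverse (real (Suc (m + d))) \<le> 1 / real (Suc m)"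
    by (simp add: inverse_eq_divide frac_le)
  then show ?case using Suc by (simp add: harm_Suc add_divide_distrib)
qed

lemma harm_two_power_le: "harm (2 ^ k) \<le> (real k + 1 :: real)"
proof (induction k)
  case 0
  then show ?case by (simp add: harm_def)
next
  case (Suc k)
  have "harm (2 ^ Suc k) = (harm (2 ^ k + 2 ^ k) :: real)" by (simp add: mult_2)
  also have "\<dots> \<le> harm (2 ^ k) + real (2 ^ k) / real (Suc (2 ^ k))" by (rule harm_add_le)
  also have "real (2 ^ k) / real (Suc (2 ^ k)) \<le> 1" by (simp add: divide_le_eq_1 add_pos_pos)
  finally show ?case using Suc by simp
qed

lemma harm_diff_ge:
  assumes "m \<le> v" and "0 < v"
  shows "real m / real v \<le> harm v - (harm (v - m) :: real)"
  using assms(1)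
proof (induction m)
  case 0
  then show ?case by simp
next
  case (Suc m)
  have "v - m = Suc (v - Suc m)" using Suc by simp
  then have "harm (v - m) = harm (v - Suc m) + 1 / (real (v - m) :: real)"
    by (simp add: harm_Suc inverse_eq_divide)
  moreover have "1 / real v \<le> 1 / real (v - m)" using Suc assms(2) by (simp add: frac_le)
  ultimately show ?case using Suc by (simp add: add_divide_distrib)
qed

definition zero_boxes :: "obs \<Rightarrow> nat set" where
  "zero_boxes os = {b. (b, 0) \<in> set os}"

definition explored_zero_sets :: "nat \<Rightarrow> obs list \<Rightarrow> nat set set" where
  "explored_zero_sets n h = zero_boxes ` {os \<in> set h. {..<n} \<subseteq> fst ` set os}"

definition candidate_sets :: "nat \<Rightarrow> obs list \<Rightarrow> nat \<Rightarrow> nat set set" where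
  "candidate_sets n h j =
     {S \<in> Pow {..<n}. card S = j \<and> (\<forall>Z\<in>explored_zero_sets n h. S \<inter> Z \<noteq> {})}"

definition min_candidate_size :: "nat \<Rightarrow> obs list \<Rightarrow> nat" where
  "min_candidate_size n h = (LEAST j. candidate_sets n h j \<noteq> {})"

definition potential :: "nat \<Rightarrow> obs list \<Rightarrow> real" where
  "potential n h = (\<Sum>j\<le>n. harm (card (candidate_sets n h j)))"

lemma zero_boxes_observe: "zero_boxes (observe c [0..<n]) = {b. b < n \<and> c b = 0}"
  by (auto simp: zero_boxes_def observe_def)

lemma observe_opens_all: "{..<n} \<subseteq> fst ` set (observe c [0..<n])"
  by (auto simp: observe_def image_image)

lemma explored_zero_sets_append:
  "explored_zero_sets n (h @ [os]) =
     (if {..<n} \<subseteq> fst ` set os then insert (zero_boxes os) (explored_zero_sets n h)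
      else explored_zero_sets n h)"
  by (auto simp: explored_zero_sets_def)

lemma candidate_sets_append_subset: "candidate_sets n (h @ [os]) j \<subseteq> candidate_sets n h j"
  by (auto simp: candidate_sets_def explored_zero_sets_append)

lemma candidate_sets_append_explored:
  "{..<n} \<subseteq> fst ` set os \<Longrightarrow>
     candidate_sets n (h @ [os]) j = {S \<in> candidate_sets n h j. S \<inter> zero_boxes os \<noteq> {}}"
  by (auto simp: candidate_sets_def explored_zero_sets_append)

lemma finite_candidate_sets: "finite (candidate_sets n h j)"
  by (rule finite_subset[of _ "Pow {..<n}"]) (auto simp: candidate_sets_def)

lemma card_candidate_sets_le: "card (candidate_sets n h j) \<le> 2 ^ n"
proof -
  have "card (candidate_sets n h j) \<le> card (Pow {..<n})"
    by (rule card_mono) (auto simp: candidate_sets_def)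
  then show ?thesis by (simp add: card_Pow)
qed

lemma potential_nonneg: "0 \<le> potential n h"
  by (simp add: potential_def sum_nonneg harm_nonneg)

lemma potential_le: "potential n h \<le> (real n + 1) ^ 2"
proof -
  have "potential n h \<le> (\<Sum>j\<le>n. real n + 1)"
    unfolding potential_def
    by (rule sum_mono) (meson harm_mono harm_two_power_le card_candidate_sets_le order_trans)
  then show ?thesis by (simp add: power2_eq_square algebra_simps)
qed

lemma potential_append_le: "potential n (h @ [os]) \<le> potential n h"
  unfolding potential_def
  by (rule sum_mono) (simp add: harm_mono finite_candidate_sets candidate_sets_append_subset card_mono)

lemma potential_explored_drop:
  assumes explored: "{..<n} \<subseteq> fst ` set os" and "k \<le> n" and nonempty: "candidate_sets n h k \<noteq> {}"
  defines "M \<equiv> {S \<in> candidate_sets n h k. S \<inter> zero_boxes os = {}}"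
  shows "potential n (h @ [os]) + real (card M) / real (card (candidate_sets n h k)) \<le> potential n h"
proof -
  define V where "V = candidate_sets n h k"
  have fin: "finite V" by (simp add: V_def finite_candidate_sets)
  have "candidate_sets n (h @ [os]) k = V - M"
    using candidate_sets_append_explored[OF explored] by (auto simp: V_def M_def)
  moreover have "card (V - M) = card V - card M"
    using fin by (intro card_Diff_subset) (auto simp: M_def V_def intro: finite_subset)
  moreover have "card M \<le> card V" using fin by (intro card_mono) (auto simp: M_def V_def)
  moreover have "0 < card V" using nonempty fin by (simp add: V_def card_gt_0_iff)
  ultimately have level_k: "harm (card (candidate_sets n (h @ [os]) k)) + real (card M) / real (card V)
                              \<le> (harm (card V) :: real)"
    using harm_diff_ge[of "card M" "card V"] by simp
  have other_levels: "(\<Sum>j\<in>{..n}-{k}. harm (card (candidate_sets n (h @ [os]) j)))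
                        \<le> (\<Sum>j\<in>{..n}-{k}. (harm (card (candidate_sets n h j)) :: real))"
    by (rule sum_mono) (simp add: harm_mono finite_candidate_sets candidate_sets_append_subset card_mono)
  show ?thesis
    using level_k other_levels \<open>k \<le> n\<close> unfolding potential_def V_def
    by (simp add: sum.remove[of "{..n}" k])
qed

definition amortized_cost :: "nat \<Rightarrow> real \<Rightarrow> obs list \<Rightarrow> policy \<Rightarrow> (nat \<Rightarrow> ennreal) \<Rightarrow> ennreal" where
  "amortized_cost n a h P c =
     snd (run_round n P c (Suc n) []) + ennreal (a * potential n (h @ [fst (run_round n P c (Suc n) [])]))"

lemma amortized_cost_explore:
  assumes "\<exists>b<n. c b = 0" and "0 \<le> a"
  shows "amortized_cost n a h (explore_policy n) c =
           ennreal (real n + a * potential n (h @ [observe c [0..<n]]))"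
  using assms potential_nonneg[of n "h @ [observe c [0..<n]]"]
  by (simp add: amortized_cost_def run_round_explore ennreal_of_nat_eq_real_of_nat del: run_round.simps)

lemma amortized_cost_scan_le:
  assumes "S \<subseteq> {..<n}" and "\<exists>b<n. c b = 0" and "0 \<le> a"
  shows "amortized_cost n a h (scan_policy (scan_order n S)) c \<le>
           ennreal (real (card S) + (if \<exists>b\<in>S. c b = 0 then 0 else real n) + a * potential n h)"
proof -
  let ?R = "run_round n (scan_policy (scan_order n S)) c (Suc n) []"
  have "snd ?R \<le> of_nat (if \<exists>b\<in>S. c b = 0 then card S else n)"
    using assms(1,2) by (rule scan_order_cost_le)
  also have "\<dots> \<le> ennreal (real (card S) + (if \<exists>b\<in>S. c b = 0 then 0 else real n))"
    by (simp add: ennreal_of_nat_eq_real_of_nat ennreal_leI)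
  finally have cost: "snd ?R \<le> \<dots>" .
  have "ennreal (a * potential n (h @ [fst ?R])) \<le> ennreal (a * potential n h)"
    using assms(3) by (intro ennreal_leI mult_left_mono potential_append_le)
  with cost have "amortized_cost n a h (scan_policy (scan_order n S)) c \<le>
      ennreal (real (card S) + (if \<exists>b\<in>S. c b = 0 then 0 else real n)) + ennreal (a * potential n h)"
    unfolding amortized_cost_def by (rule add_mono)
  then show ?thesis
    using assms(3) potential_nonneg[of n h] by (simp add: ennreal_plus[symmetric] del: ennreal_plus)
qed

lemma exploit_expectation_le:
  assumes V: "V \<subseteq> Pow {..<n}" "finite V" "V \<noteq> {}" "\<forall>S\<in>V. card S = k"
    and zero: "\<exists>b<n. c b = 0" and a: "0 \<le> a"
  defines "M \<equiv> {S \<in> V. \<forall>b\<in>S. c b \<noteq> 0}"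
  shows "(\<integral>\<^sup>+ S. amortized_cost n a h (scan_policy (scan_order n S)) c \<partial>pmf_of_set V)
           \<le> ennreal (real k + real n * (real (card M) / real (card V)) + a * potential n h)"
proof -
  define g where "g S = real k + real n * indicator M S + a * potential n h" for S
  have g_nonneg: "0 \<le> g S" for S
    using a potential_nonneg[of n h] by (simp add: g_def)
  have "amortized_cost n a h (scan_policy (scan_order n S)) c \<le> ennreal (g S)" if "S \<in> V" for S
  proof -
    have "(if \<exists>b\<in>S. c b = 0 then 0 else real n) = real n * indicator M S"
      using that by (auto simp: M_def)
    then show ?thesis
      using amortized_cost_scan_le[of S n c a h] that V zero a by (auto simp: g_def)
  qed
  then have "(\<integral>\<^sup>+ S. amortized_cost n a h (scan_policy (scan_order n S)) c \<partial>pmf_of_set V)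
               \<le> (\<integral>\<^sup>+ S. ennreal (g S) \<partial>pmf_of_set V)"
    using V by (intro nn_integral_mono_AE) (auto simp: AE_measure_pmf_iff)
  also have "\<dots> = ennreal (sum g V / real (card V))"
    using V g_nonneg
    by (simp add: nn_integral_pmf_of_set sum_ennreal ennreal_of_nat_eq_real_of_nat sum_nonneg
          divide_ennreal card_gt_0_iff)
  also have "sum g V = real (card V) * (real k + a * potential n h) + real n * real (card M)"
  proof -
    have "sum (indicator M) V = real (card M)"
      using V(2) by (simp add: indicator_def sum.If_cases M_def Int_def)
    then show ?thesis by (simp add: g_def sum.distrib sum_distrib_left[symmetric] algebra_simps)
  qed
  also have "\<dots> / real (card V) = real k + real n * (real (card M) / real (card V)) + a * potential n h"
    using V by (simp add: field_simps card_gt_0_iff)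
  finally show ?thesis .
qed

section \<open>The randomized algorithm\<close>

type_synonym seed = "bool \<times> (nat set set \<Rightarrow> nat set)"

definition round_policy :: "nat \<Rightarrow> seed \<Rightarrow> obs list \<Rightarrow> policy" where
  "round_policy n y h =
     (if fst y then explore_policy n
      else scan_policy (scan_order n (snd y (candidate_sets n h (min_candidate_size n h)))))"

definition seeded_alg :: "nat \<Rightarrow> (nat \<Rightarrow> seed) \<Rightarrow> det_alg" where
  "seeded_alg n r h = round_policy n (r (Suc (length h))) h"

text \<open>Independently for every family V of box sets, a uniform member of V: the
  family met in a round depends on the history, so the seed must fix a choice for all of them.\<close>
definition uniform_choice :: "nat \<Rightarrow> (nat set set \<Rightarrow> nat set) pmf" where
  "uniform_choice n =
     Pi_pmf (Pow (Pow {..<n})) {} (\<lambda>V. if V = {} then return_pmf {} else pmf_of_set V)"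

definition seed_pmf :: "nat \<Rightarrow> real \<Rightarrow> seed pmf" where
  "seed_pmf n p = pair_pmf (bernoulli_pmf p) (uniform_choice n)"

lemma nn_integral_uniform_choice:
  assumes "V \<subseteq> Pow {..<n}" and "V \<noteq> {}"
  shows "(\<integral>\<^sup>+ g. F (g V) \<partial>uniform_choice n) = (\<integral>\<^sup>+ S. F S \<partial>pmf_of_set V)"
proof -
  have "map_pmf (\<lambda>g. g V) (uniform_choice n) = pmf_of_set V"
    using assms unfolding uniform_choice_def by (subst Pi_pmf_component) auto
  then show ?thesis
    by (metis nn_integral_map_pmf)
qed

lemma explore_exploit_balance:
  fixes p a n k s f P P' :: real
  assumes "0 \<le> p" "p \<le> 1" "0 \<le> a" "(1 - p) * n \<le> p * a"
    and "0 \<le> k" "k \<le> s" "0 \<le> f" "P' + f \<le> P"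
  shows "p * (n + a * P') + (1 - p) * (k + n * f + a * P) \<le> s + p * n + a * P"
proof -
  have "a * (P' + f) \<le> a * P"
    using assms by (intro mult_left_mono) auto
  then have "p * (a * P') \<le> p * (a * P - a * f)"
    using assms by (intro mult_left_mono) (auto simp: algebra_simps)
  moreover have "(1 - p) * n * f \<le> p * a * f"
    using assms by (intro mult_right_mono) auto
  moreover have "(1 - p) * k \<le> s"
    using assms mult_left_le_one_le[of k "1 - p"] by linarith
  ultimately show ?thesis by (simp add: algebra_simps)
qed

lemma min_candidate_size:
  assumes "S \<in> candidate_sets n h s"
  shows "min_candidate_size n h \<le> s" and "min_candidate_size n h \<le> n"
    and "candidate_sets n h (min_candidate_size n h) \<noteq> {}"
proof -
  have "candidate_sets n h s \<noteq> {}"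
    using assms by blast
  then show "min_candidate_size n h \<le> s" and nonempty: "candidate_sets n h (min_candidate_size n h) \<noteq> {}"
    unfolding min_candidate_size_def by (rule Least_le, rule LeastI)
  then obtain S' where "S' \<subseteq> {..<n}" "card S' = min_candidate_size n h"
    by (auto simp: candidate_sets_def)
  then show "min_candidate_size n h \<le> n"
    by (metis card_lessThan card_mono finite_lessThan)
qed

lemma nn_integral_seed_pmf:
  assumes "0 \<le> p" and "p \<le> 1"
  shows "(\<integral>\<^sup>+ y. F y \<partial>seed_pmf n p) =
           ennreal p * (\<integral>\<^sup>+ g. F (True, g) \<partial>uniform_choice n)
           + ennreal (1 - p) * (\<integral>\<^sup>+ g. F (False, g) \<partial>uniform_choice n)"
  using assms by (simp add: seed_pmf_def nn_integral_pair_pmf' mult.commute)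

lemma expected_amortized_cost_le:
  assumes "S\<^sub>0 \<in> candidate_sets n h s" and "\<exists>b\<in>S\<^sub>0. c b = 0"
    and p: "0 \<le> p" "p \<le> 1" and a: "0 \<le> a" "(1 - p) * real n \<le> p * a"
  shows "(\<integral>\<^sup>+ y. amortized_cost n a h (round_policy n y h) c \<partial>seed_pmf n p)
           \<le> ennreal (real s + p * real n + a * potential n h)"
proof -
  define k where "k = min_candidate_size n h"
  define V where "V = candidate_sets n h k"
  note k = min_candidate_size[OF assms(1), folded k_def, folded V_def]
  have V: "V \<subseteq> Pow {..<n}" "finite V" "\<forall>S\<in>V. card S = k"
    by (auto simp: V_def candidate_sets_def finite_candidate_sets)
  have zero: "\<exists>b<n. c b = 0"
    using assms(1,2) by (auto simp: candidate_sets_def)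
  define full where "full = observe c [0..<n]"
  define M where "M = {S \<in> V. \<forall>b\<in>S. c b \<noteq> 0}"
  define f where "f = real (card M) / real (card V)"
  have "M = {S \<in> V. S \<inter> zero_boxes full = {}}"
    using V by (auto simp: M_def full_def zero_boxes_observe)
  then have drop: "potential n (h @ [full]) + f \<le> potential n h"
    using potential_explored_drop[of n full k h] observe_opens_all k
    by (simp add: f_def V_def full_def)
  have "(\<integral>\<^sup>+ g. amortized_cost n a h (round_policy n (False, g) h) c \<partial>uniform_choice n)
      = (\<integral>\<^sup>+ S. amortized_cost n a h (scan_policy (scan_order n S)) c \<partial>pmf_of_set V)"
    using nn_integral_uniform_choice[OF V(1) k(3)] by (simp add: round_policy_def V_def k_def)
  also have "\<dots> \<le> ennreal (real k + real n * f + a * potential n h)"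
    unfolding f_def M_def by (rule exploit_expectation_le[OF V(1,2) k(3) V(3) zero a(1)])
  finally have exploit: "(\<integral>\<^sup>+ g. amortized_cost n a h (round_policy n (False, g) h) c \<partial>uniform_choice n)
                           \<le> ennreal (real k + real n * f + a * potential n h)" .
  have "(\<integral>\<^sup>+ y. amortized_cost n a h (round_policy n y h) c \<partial>seed_pmf n p)
      \<le> ennreal p * ennreal (real n + a * potential n (h @ [full]))
        + ennreal (1 - p) * ennreal (real k + real n * f + a * potential n h)"
    using exploit zero a(1)
    by (simp add: nn_integral_seed_pmf[OF p] round_policy_def amortized_cost_explore full_def
        add_left_mono mult_left_mono)
  also have "\<dots> = ennreal (p * (real n + a * potential n (h @ [full]))
                           + (1 - p) * (real k + real n * f + a * potential n h))"
    using p a potential_nonneg[of n h] potential_nonneg[of n "h @ [full]"]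
    by (simp add: f_def ennreal_mult'[symmetric] ennreal_plus[symmetric] del: ennreal_plus)
  also have "\<dots> \<le> ennreal (real s + p * real n + a * potential n h)"
    using explore_exploit_balance[OF p a _ _ _ drop] k(1) by (intro ennreal_leI) (simp add: f_def)
  finally show ?thesis .
qed

section \<open>Accounting over the rounds\<close>

lemma nn_integral_Pi_pmf_insert:
  assumes "finite A" and "x \<notin> A"
  shows "(\<integral>\<^sup>+ r. G r \<partial>Pi_pmf (insert x A) d P) = (\<integral>\<^sup>+ f. \<integral>\<^sup>+ y. G (f(x := y)) \<partial>P x \<partial>Pi_pmf A d P)"
proof -
  have "(\<integral>\<^sup>+ r. G r \<partial>Pi_pmf (insert x A) d P) = (\<integral>\<^sup>+ z. G ((snd z)(x := fst z)) \<partial>pair_pmf (P x) (Pi_pmf A d P))"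
    using assms by (simp add: Pi_pmf_insert case_prod_beta)
  also have "\<dots> = (\<integral>\<^sup>+ z. G ((fst z)(x := snd z)) \<partial>pair_pmf (Pi_pmf A d P) (P x))"
    by (subst pair_commute_pmf) (simp add: case_prod_beta)
  finally show ?thesis by (simp add: nn_integral_pair_pmf')
qed

lemma length_history: "length (history n D c t) = t"
  by (induction t) (simp_all add: Let_def)

lemma history_seeded_alg_cong:
  "(\<And>i. 1 \<le> i \<Longrightarrow> i \<le> t \<Longrightarrow> r i = r' i) \<Longrightarrow>
     history n (seeded_alg n r) c t = history n (seeded_alg n r') c t"
proof (induction t)
  case 0
  then show ?case by simp
next
  case (Suc t)
  then have IH: "history n (seeded_alg n r) c t = history n (seeded_alg n r') c t"
    by simp
  have "r (Suc t) = r' (Suc t)" using Suc.prems by simp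
  then have "seeded_alg n r (history n (seeded_alg n r') c t) = seeded_alg n r' (history n (seeded_alg n r') c t)"
    by (simp add: seeded_alg_def length_history)
  with IH show ?case
    by (simp add: Let_def del: run_round.simps)
qed

lemma round_cost_seeded_alg_cong:
  assumes "\<And>i. 1 \<le> i \<Longrightarrow> i \<le> t \<Longrightarrow> r i = r' i" and "1 \<le> t"
  shows "round_cost n (seeded_alg n r) c t = round_cost n (seeded_alg n r') c t"
proof -
  have "history n (seeded_alg n r) c (t - 1) = history n (seeded_alg n r') c (t - 1)"
    using assms(1) by (intro history_seeded_alg_cong) auto
  moreover have "r t = r' t" using assms by simp
  ultimately show ?thesis
    using assms(2) by (simp add: round_cost_def seeded_alg_def length_history del: run_round.simps)
qed

lemma history_faithful:
  "os \<in> set (history n D c t) \<Longrightarrow> \<exists>s\<in>{1..t}. \<forall>x\<in>set os. fst x < n \<and> snd x = c s (fst x)"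
proof (induction t)
  case 0
  then show ?case by simp
next
  case (Suc t)
  let ?h = "history n D c t"
  have "os \<in> set ?h \<or> os = fst (run_round n (D ?h) (c (Suc t)) (Suc n) [])"
    using Suc.prems by (simp add: Let_def del: run_round.simps) blast
  then show ?case
  proof
    assume "os \<in> set ?h"
    then show ?thesis using Suc.IH by force
  next
    assume "os = fst (run_round n (D ?h) (c (Suc t)) (Suc n) [])"
    then have "\<forall>x\<in>set os. fst x < n \<and> snd x = c (Suc t) (fst x)"
      using run_round_observations_faithful[of "[]" n "c (Suc t)" "D ?h" "Suc n"]
      by (simp del: run_round.simps)
    then show ?thesis by force
  qed
qed

lemma hitting_set_in_candidate_sets:
  assumes S: "S \<subseteq> {..<n}" and hit: "\<forall>s\<in>{1..t}. \<exists>b\<in>S. c s b = 0"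
  shows "S \<in> candidate_sets n (history n D c t) (card S)"
proof -
  have "S \<inter> Z \<noteq> {}" if Z: "Z \<in> explored_zero_sets n (history n D c t)" for Z
  proof -
    obtain os where os: "os \<in> set (history n D c t)" "{..<n} \<subseteq> fst ` set os" "Z = zero_boxes os"
      using Z unfolding explored_zero_sets_def by blast
    obtain s where s: "s \<in> {1..t}" "\<forall>x\<in>set os. fst x < n \<and> snd x = c s (fst x)"
      using history_faithful[OF os(1)] by blast
    obtain b where b: "b \<in> S" "c s b = 0" using hit s(1) by blast
    then obtain v where "(b, v) \<in> set os" using S os(2) by auto
    then have "(b, 0) \<in> set os" using s(2) b by force
    then show ?thesis using b os(3) by (auto simp: zero_boxes_def)
  qed
  then show ?thesis using S by (auto simp: candidate_sets_def)
qed

lemma seeded_alg_extend: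
  fixes r :: "nat \<Rightarrow> seed" and y :: seed and n m :: nat and c :: "nat \<Rightarrow> nat \<Rightarrow> ennreal"
  defines "r' \<equiv> r(Suc m := y)" and "h \<equiv> history n (seeded_alg n r) c m"
  shows "(\<Sum>t\<in>{1..Suc m}. round_cost n (seeded_alg n r') c t)
           + ennreal (a * potential n (history n (seeded_alg n r') c (Suc m)))
         = (\<Sum>t\<in>{1..m}. round_cost n (seeded_alg n r) c t)
           + amortized_cost n a h (round_policy n y h) (c (Suc m))"
proof -
  have hist: "history n (seeded_alg n r') c m = h"
    unfolding h_def r'_def by (rule history_seeded_alg_cong) simp
  have earlier: "(\<Sum>t\<in>{1..m}. round_cost n (seeded_alg n r') c t) = (\<Sum>t\<in>{1..m}. round_cost n (seeded_alg n r) c t)"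
    unfolding r'_def by (intro sum.cong refl round_cost_seeded_alg_cong) auto
  have policy: "seeded_alg n r' h = round_policy n y h"
    by (simp add: seeded_alg_def r'_def h_def length_history)
  have "{1..Suc m} = insert (Suc m) {1..m}" by auto
  then show ?thesis
    using hist earlier policy
    by (simp add: round_cost_def amortized_cost_def Let_def add.assoc del: run_round.simps)
qed

lemma nn_integral_seeded_alg_Suc:
  "(\<integral>\<^sup>+ r. (\<Sum>t\<in>{1..Suc m}. round_cost n (seeded_alg n r) c t)
              + ennreal (a * potential n (history n (seeded_alg n r) c (Suc m))) \<partial>Pi_pmf {1..Suc m} d (\<lambda>_. Y))
   = (\<integral>\<^sup>+ r. (\<Sum>t\<in>{1..m}. round_cost n (seeded_alg n r) c t)
              + (\<integral>\<^sup>+ y. amortized_cost n a (history n (seeded_alg n r) c m)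
                          (round_policy n y (history n (seeded_alg n r) c m)) (c (Suc m)) \<partial>Y)
        \<partial>Pi_pmf {1..m} d (\<lambda>_. Y))"
proof -
  define G where "G r = (\<Sum>t\<in>{1..Suc m}. round_cost n (seeded_alg n r) c t)
                        + ennreal (a * potential n (history n (seeded_alg n r) c (Suc m)))" for r
  have "{1..Suc m} = insert (Suc m) {1..m}" by auto
  then have "(\<integral>\<^sup>+ r. G r \<partial>Pi_pmf {1..Suc m} d (\<lambda>_. Y))
      = (\<integral>\<^sup>+ r. \<integral>\<^sup>+ y. G (r(Suc m := y)) \<partial>Y \<partial>Pi_pmf {1..m} d (\<lambda>_. Y))"
    by (simp only:) (rule nn_integral_Pi_pmf_insert, auto)
  then show ?thesis
    by (simp only: G_def seeded_alg_extend) (simp add: nn_integral_add)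
qed

definition default_seed :: seed where
  "default_seed = (False, \<lambda>_. {})"

definition random_alg :: "nat \<Rightarrow> real \<Rightarrow> nat \<Rightarrow> det_alg pmf" where
  "random_alg n p T = map_pmf (seeded_alg n) (Pi_pmf {1..T} default_seed (\<lambda>_. seed_pmf n p))"

lemma expected_amortized_total_le:
  fixes c :: "nat \<Rightarrow> nat \<Rightarrow> ennreal"
  assumes S: "S \<subseteq> {..<n}" and hit: "\<forall>t\<in>{1..T}. \<exists>b\<in>S. c t b = 0"
    and p: "0 \<le> p" "p \<le> 1" and a: "0 \<le> a" "(1 - p) * real n \<le> p * a"
    and "m \<le> T"
  shows "(\<integral>\<^sup>+ r. (\<Sum>t\<in>{1..m}. round_cost n (seeded_alg n r) c t)
                + ennreal (a * potential n (history n (seeded_alg n r) c m))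
            \<partial>Pi_pmf {1..m} default_seed (\<lambda>_. seed_pmf n p))
         \<le> ennreal (real m * (real (card S) + p * real n) + a * potential n [])"
  using \<open>m \<le> T\<close>
proof (induction m)
  case 0
  then show ?case by simp
next
  case (Suc m)
  define Q where "Q = Pi_pmf {1..m} default_seed (\<lambda>_. seed_pmf n p)"
  define h where "h r = history n (seeded_alg n r) c m" for r
  define A where "A r = (\<Sum>t\<in>{1..m}. round_cost n (seeded_alg n r) c t)" for r
  define B where "B = real (card S) + p * real n"
  have round: "(\<integral>\<^sup>+ y. amortized_cost n a (h r) (round_policy n y (h r)) (c (Suc m)) \<partial>seed_pmf n p)
                 \<le> ennreal (B + a * potential n (h r))" for r
    unfolding B_def
  proof (rule expected_amortized_cost_le[OF _ _ p a])
    show "S \<in> candidate_sets n (h r) (card S)"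
      unfolding h_def using S hit Suc.prems by (intro hitting_set_in_candidate_sets) auto
    show "\<exists>b\<in>S. c (Suc m) b = 0" using hit Suc.prems by auto
  qed
  have "(\<integral>\<^sup>+ r. (\<Sum>t\<in>{1..Suc m}. round_cost n (seeded_alg n r) c t)
                + ennreal (a * potential n (history n (seeded_alg n r) c (Suc m)))
            \<partial>Pi_pmf {1..Suc m} default_seed (\<lambda>_. seed_pmf n p))
      = (\<integral>\<^sup>+ r. A r + \<integral>\<^sup>+ y. amortized_cost n a (h r) (round_policy n y (h r)) (c (Suc m)) \<partial>seed_pmf n p \<partial>Q)"
    unfolding Q_def A_def h_def by (rule nn_integral_seeded_alg_Suc)
  also have "\<dots> \<le> (\<integral>\<^sup>+ r. A r + ennreal (B + a * potential n (h r)) \<partial>Q)"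
    by (intro nn_integral_mono add_left_mono round)
  also have "\<dots> = (\<integral>\<^sup>+ r. (A r + ennreal (a * potential n (h r))) + ennreal B \<partial>Q)"
    using a p potential_nonneg
    by (intro nn_integral_cong) (simp add: B_def ennreal_plus[symmetric] add_ac del: ennreal_plus)
  also have "\<dots> = (\<integral>\<^sup>+ r. A r + ennreal (a * potential n (h r)) \<partial>Q) + ennreal B"
    by (simp add: nn_integral_add)
  also have "\<dots> \<le> ennreal (real m * B + a * potential n []) + ennreal B"
    using Suc by (intro add_right_mono) (simp add: A_def h_def Q_def B_def)
  also have "\<dots> = ennreal (real (Suc m) * B + a * potential n [])"
    using p a potential_nonneg[of n "[]"]
    by (simp add: B_def ennreal_plus[symmetric] algebra_simps del: ennreal_plus)
  finally show ?case unfolding B_def .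
qed

lemma expected_total_cost_le:
  fixes c :: "nat \<Rightarrow> nat \<Rightarrow> ennreal"
  assumes "S \<subseteq> {..<n}" and "\<forall>t\<in>{1..T}. \<exists>b\<in>S. c t b = 0"
    and p: "0 \<le> p" "p \<le> 1" and a: "0 \<le> a" "(1 - p) * real n \<le> p * a"
  shows "(\<integral>\<^sup>+ D. (\<Sum>t\<in>{1..T}. round_cost n D c t) \<partial>random_alg n p T)
           \<le> ennreal (real T * (real (card S) + p * real n) + a * (real n + 1) ^ 2)"
proof -
  have "(\<integral>\<^sup>+ D. (\<Sum>t\<in>{1..T}. round_cost n D c t) \<partial>random_alg n p T)
     \<le> (\<integral>\<^sup>+ r. (\<Sum>t\<in>{1..T}. round_cost n (seeded_alg n r) c t)
            + ennreal (a * potential n (history n (seeded_alg n r) c T))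
          \<partial>Pi_pmf {1..T} default_seed (\<lambda>_. seed_pmf n p))"
    by (auto simp: random_alg_def intro: nn_integral_mono)
  also have "\<dots> \<le> ennreal (real T * (real (card S) + p * real n) + a * potential n [])"
    using expected_amortized_total_le[OF assms] by simp
  also have "\<dots> \<le> ennreal (real T * (real (card S) + p * real n) + a * (real n + 1) ^ 2)"
    using a potential_le[of n "[]"] by (intro ennreal_leI add_left_mono mult_left_mono)
  finally show ?thesis .
qed

lemma OPT_eq_card_hitting_set:
  assumes "valid_scenarios n T c"
  obtains S where "S \<subseteq> {..<n}" "\<forall>t\<in>{1..T}. \<exists>b\<in>S. c t b = 0" "OPT n T c = of_nat (card S)"
proof -
  have fin: "finite (na_cost T c ` Pow {..<n})" "na_cost T c ` Pow {..<n} \<noteq> {}" by auto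
  then obtain S where S: "S \<subseteq> {..<n}" "OPT n T c = na_cost T c S"
    using Min_in[OF fin] Min_Inf[OF fin] by (auto simp: OPT_def)
  have "na_cost T c {..<n} = of_nat n"
    using assms by (auto simp: na_cost_def valid_scenarios_def)
  moreover have "OPT n T c \<le> na_cost T c {..<n}"
    unfolding OPT_def by (rule INF_lower) simp
  ultimately have "na_cost T c S \<noteq> \<infinity>"
    using S(2) by (auto simp: top_unique)
  then show ?thesis
    using that S by (auto simp: na_cost_def split: if_splits)
qed

definition exploration_rate :: "nat \<Rightarrow> nat \<Rightarrow> real" where
  "exploration_rate n T = min 1 ((real n + 1) / sqrt (real T))"

lemma exploration_rate_bounds:
  fixes n T :: nat and p :: real
  assumes "1 \<le> T"
  defines "p \<equiv> exploration_rate n T"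
  shows "0 < p" "p \<le> 1" "p \<le> (real n + 1) / sqrt (real T)"
    and "(1 - p) * (real n + 1) \<le> p * sqrt (real T)"
proof -
  have s: "0 < sqrt (real T)" using assms(1) by simp
  then show "0 < p" "p \<le> 1" "p \<le> (real n + 1) / sqrt (real T)"
    by (auto simp: p_def exploration_rate_def)
  show "(1 - p) * (real n + 1) \<le> p * sqrt (real T)"
  proof (cases "(real n + 1) / sqrt (real T) \<le> 1")
    case True
    then have "p * sqrt (real T) = real n + 1" using s by (simp add: p_def exploration_rate_def)
    then show ?thesis using \<open>0 < p\<close> by (simp add: algebra_simps)
  next
    case False
    then show ?thesis using s by (simp add: p_def exploration_rate_def)
  qed
qed

lemma exploration_rate_overhead:
  fixes n T :: nat and p a :: real
  assumes "1 \<le> n" and "1 \<le> T"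
  defines "p \<equiv> exploration_rate n T" and "a \<equiv> real n * (1 - p) / p"
  shows "0 \<le> p" "p \<le> 1" "0 \<le> a" "(1 - p) * real n \<le> p * a"
    and "p * real n + a * (real n + 1) ^ 2 / real T \<le> 4 * real n ^ 2 / sqrt (real T)"
proof -
  define s where "s = sqrt (real T)"
  have s: "0 < s" "s * s = real T" using assms(2) by (auto simp: s_def)
  note p = exploration_rate_bounds[OF assms(2), of n, folded p_def s_def]
  then show "0 \<le> p" "p \<le> 1" "0 \<le> a" "(1 - p) * real n \<le> p * a"
    by (auto simp: a_def)
  have "p * real n \<le> (real n + 1) / s * real n"
    using p(3) by (rule mult_right_mono) simp
  then have "p * real n \<le> real n * (real n + 1) / s"
    by (simp add: mult.commute)
  moreover have "a * (real n + 1) ^ 2 / real T \<le> real n * (real n + 1) / s"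
  proof -
    have "a * (real n + 1) ^ 2 / real T = real n * ((1 - p) * (real n + 1)) * (real n + 1) / (p * s * s)"
      using p(1) s by (simp add: a_def power2_eq_square field_simps)
    also have "\<dots> \<le> real n * (p * s) * (real n + 1) / (p * s * s)"
      using p(1,4) s by (intro divide_right_mono mult_right_mono mult_left_mono) auto
    also have "\<dots> = real n * (real n + 1) / s"
      using p(1) s(1) by (simp add: field_simps)
    finally show ?thesis .
  qed
  moreover have "2 * (real n * (real n + 1)) / s \<le> 4 * real n ^ 2 / s"
    using assms(1) s by (intro divide_right_mono) (auto simp: power2_eq_square algebra_simps)
  ultimately show "p * real n + a * (real n + 1) ^ 2 / real T \<le> 4 * real n ^ 2 / sqrt (real T)"
    unfolding s_def[symmetric] by (simp add: add_divide_distrib[symmetric])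
qed

lemma random_alg_average_cost_le:
  assumes valid: "valid_scenarios n T c" and T: "1 \<le> T"
  defines "p \<equiv> exploration_rate n T"
  shows "ennreal (1 / real T) * (\<integral>\<^sup>+ D. (\<Sum>t\<in>{1..T}. round_cost n D c t) \<partial>random_alg n p T)
           \<le> OPT n T c + ennreal (4 * real n ^ 2 / sqrt (real T))"
proof -
  define a where "a = real n * (1 - p) / p"
  have "1 \<le> n" using valid T by (auto simp: valid_scenarios_def)
  note overhead = exploration_rate_overhead[OF this T, folded p_def, folded a_def]
  obtain S where S: "S \<subseteq> {..<n}" "\<forall>t\<in>{1..T}. \<exists>b\<in>S. c t b = 0" "OPT n T c = of_nat (card S)"
    using valid by (rule OPT_eq_card_hitting_set)
  have "ennreal (1 / real T) * (\<integral>\<^sup>+ D. (\<Sum>t\<in>{1..T}. round_cost n D c t) \<partial>random_alg n p T)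
      \<le> ennreal (1 / real T) * ennreal (real T * (real (card S) + p * real n) + a * (real n + 1) ^ 2)"
    using expected_total_cost_le[OF S(1,2) overhead(1-4)] by (rule mult_left_mono) simp
  also have "\<dots> = ennreal ((real T * (real (card S) + p * real n) + a * (real n + 1) ^ 2) / real T)"
    by (simp add: ennreal_mult'[symmetric])
  also have "(real T * (real (card S) + p * real n) + a * (real n + 1) ^ 2) / real T
      = real (card S) + (p * real n + a * (real n + 1) ^ 2 / real T)"
    using T by (simp add: field_simps)
  also have "\<dots> \<le> ennreal (real (card S) + 4 * real n ^ 2 / sqrt (real T))"
    using overhead(5) by (intro ennreal_leI) simp
  also have "\<dots> = OPT n T c + ennreal (4 * real n ^ 2 / sqrt (real T))"
    using S(3) by (simp add: ennreal_of_nat_eq_real_of_nat)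
  finally show ?thesis .
qed

theorem theorem5p3:
  shows "\<exists>C::real. \<forall>n T::nat. T \<ge> 1 \<longrightarrow>
           (\<exists>A :: det_alg pmf. \<forall>c. valid_scenarios n T c \<longrightarrow>
              ennreal (1 / real T) * (\<integral>\<^sup>+ D. (\<Sum>t\<in>{1..T}. round_cost n D c t) \<partial>measure_pmf A)
                \<le> OPT n T c + (OPT n T c + ennreal (C * real n ^ 2 / sqrt (real T))))"
proof (intro exI[of _ 4] allI impI)
  fix n T :: nat
  assume "T \<ge> 1"
  show "\<exists>A :: det_alg pmf. \<forall>c. valid_scenarios n T c \<longrightarrow>
          ennreal (1 / real T) * (\<integral>\<^sup>+ D. (\<Sum>t\<in>{1..T}. round_cost n D c t) \<partial>measure_pmf A)
            \<le> OPT n T c + (OPT n T c + ennreal (4 * real n ^ 2 / sqrt (real T)))"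
  proof (intro exI allI impI)
    fix c
    assume "valid_scenarios n T c"
    from random_alg_average_cost_le[OF this \<open>T \<ge> 1\<close>]
    show "ennreal (1 / real T) *
            (\<integral>\<^sup>+ D. (\<Sum>t\<in>{1..T}. round_cost n D c t) \<partial>random_alg n (exploration_rate n T) T)
          \<le> OPT n T c + (OPT n T c + ennreal (4 * real n ^ 2 / sqrt (real T)))"
      by (rule order_trans) (simp add: add_mono)
  qed
qed

end
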